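(* Let $W_0,W_1,W_2,\dots$ be the words over the alphabet $\{c_0,c_1,c_2,c_3\}$ defined by $W_k=c_k$ for $k=0,1,2,3$ and, recursively, $W_{2n+2}=W_0W_1W_2\cdots W_{2n}$ for $n\ge1$ and $W_{2n+1}=W_{2n-1}W_{2n-2}W_{2n-1}$ for $n\ge2$. Let $\sigma$ be the morphism $\sigma(c_0)=c_0c_1$, $\sigma(c_1)=c_2c_3$, $\sigma(c_2)=c_0c_1c_2$, $\sigma(c_3)=c_3c_2c_3$. Then for each $n\ge0$, $W_{2n+2}=\sigma^n(c_2)$ and $W_{2n+3}=\sigma^n(c_3)$.
   Context: In the paper, $W_k$ is the coding $\Psi(\Lambda_k)$ of the Lucas interval $\Lambda_k$ (where $\Lambda_0=[0,1]$, $\Lambda_{2n}=[L_{2n},L_{2n+1}]$, $\Lambda_{2n+1}=[L_{2n+1}+1,L_{2n+2}-1]$ for $n\ge1$, with Lucas numbers $L_0=2$, $L_1=1$, $L_n=L_{n-1}+L_{n-2}$); the statement above only depends on the recursive definition of the words. Juxtaposition denotes concatenation of words. *)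

theory Defs
  imports Main
begin

datatype letter = c0 | c1 | c2 | c3

function W :: "nat \<Rightarrow> letter list" where
  "W k = (if k = 0 then [c0] else if k = 1 then [c1] else if k = 2 then [c2]
          else if k = 3 then [c3]
          else if even k then concat (map (\<lambda>i. W i) [0..<k - 1])
          else W (k - 2) @ W (k - 3) @ W (k - 2))"
  by auto
termination
  by (relation "measure id") auto

declare W.simps [simp del]

fun sigma_letter :: "letter \<Rightarrow> letter list" where
  "sigma_letter c0 = [c0, c1]"
| "sigma_letter c1 = [c2, c3]"
| "sigma_letter c2 = [c0, c1, c2]"
| "sigma_letter c3 = [c3, c2, c3]"

definition sigma :: "letter list \<Rightarrow> letter list" where
  "sigma w = concat (map sigma_letter w)"

end

theory Submission
  imports Defs
begin

text \<open>For \<open>k \<ge> 3\<close> both defining recursions of \<open>W\<close> collapse to the single rule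
  \<open>W (k + 2) = W k @ W (k - 1) @ W k\<close>: in the even case the prefix \<open>W\<^sub>0 \<cdots> W\<^sub>k\<^sub>-\<^sub>2\<close>
  of \<open>W (k + 2)\<close> is itself \<open>W k\<close>. Since \<open>\<sigma>\<close> is a morphism, it maps this rule to the same
  rule with all indices raised by 2, so \<open>\<sigma> (W k) = W (k + 2)\<close> for all \<open>k \<ge> 2\<close> by strong
  induction from the cases \<open>k = 2, 3, 4\<close>. Iterating from \<open>W 2 = [c2]\<close> and \<open>W 3 = [c3]\<close>
  gives the theorem.\<close>

lemma sigma_append [simp]: "sigma (xs @ ys) = sigma xs @ sigma ys"
  by (simp add: sigma_def)

lemma W_0_1_2_3 [simp]: "W 0 = [c0]" "W 1 = [c1]" "W 2 = [c2]" "W 3 = [c3]"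
  by (simp_all add: W.simps)

lemma W_even: "4 \<le> k \<Longrightarrow> even k \<Longrightarrow> W k = concat (map W [0..<k - 1])"
  by (subst W.simps) auto

lemma W_odd: "4 \<le> k \<Longrightarrow> odd k \<Longrightarrow> W k = W (k - 2) @ W (k - 3) @ W (k - 2)"
  by (subst W.simps) auto

lemma W_add_3:
  assumes "2 \<le> k"
  shows "W (k + 3) = W (k + 1) @ W k @ W (k + 1)"
proof (cases "odd k")
  case True
  with assms have "3 \<le> k"
    by presburger
  have "W (k + 3) = concat (map W [0..<k + 2])"
    using W_even[of "k + 3"] True \<open>3 \<le> k\<close> by simp
  also have "\<dots> = concat (map W [0..<k]) @ W k @ W (k + 1)"
    by simp
  also have "concat (map W [0..<k]) = W (k + 1)"
    using W_even[of "k + 1"] True \<open>3 \<le> k\<close> by simp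
  finally show ?thesis .
next
  case False
  then show ?thesis
    using W_odd[of "k + 3"] assms by simp
qed

lemma W_4: "W 4 = [c0, c1, c2]"
  by (simp add: W.simps upt_rec)

lemma sigma_W: "2 \<le> k \<Longrightarrow> sigma (W k) = W (k + 2)"
proof (induction k rule: less_induct)
  case (less k)
  have "k = 2 \<or> k = 3 \<or> k = 4 \<or> (k = (k - 3) + 3 \<and> 2 \<le> k - 3)"
    using less.prems by linarith
  then consider "k = 2" | "k = 3" | "k = 4" | j where "k = j + 3" "2 \<le> j"
    by blast
  then show ?case
  proof cases
    case 3
    have "W 6 = W 4 @ W 3 @ W 4"
      using W_add_3[of 3] by simp
    with 3 show ?thesis
      by (simp add: W_4 sigma_def)
  next
    case (4 j)
    have "sigma (W k) = sigma (W (j + 1)) @ sigma (W j) @ sigma (W (j + 1))"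
      unfolding \<open>k = j + 3\<close> W_add_3[OF \<open>2 \<le> j\<close>] sigma_append ..
    also have "\<dots> = W (j + 3) @ W (j + 2) @ W (j + 3)"
    proof -
      have "sigma (W (j + 1)) = W (j + 3)" "sigma (W j) = W (j + 2)"
        using 4 less.IH[of "j + 1"] less.IH[of j] by (simp_all add: eval_nat_numeral)
      then show ?thesis
        by (simp only:)
    qed
    also have "\<dots> = W (k + 2)"
      using 4 W_add_3[of "j + 2"] by (simp add: eval_nat_numeral)
    finally show ?thesis .
  qed (use W_add_3[of 2] in \<open>simp_all add: W_4 sigma_def\<close>)
qed

theorem lemma4:
  fixes n :: nat
  shows "W (2 * n + 2) = (sigma ^^ n) [c2] \<and> W (2 * n + 3) = (sigma ^^ n) [c3]"
proof (induction n)
  case 0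
  show ?case
    by (simp only: mult_0_right add_0 funpow_0 W_0_1_2_3 simp_thms)
next
  case (Suc n)
  have "W (2 * Suc n + 2) = sigma (W (2 * n + 2))"
    and "W (2 * Suc n + 3) = sigma (W (2 * n + 3))"
    using sigma_W[of "2 * n + 2"] sigma_W[of "2 * n + 3"] by simp_all
  with Suc show ?case by simp
qed

end
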